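(* Let $q\in(0,1)$ and let $\alpha,\beta,z\in\mathbb{C}$ with $|\alpha|<1$ and $z\neq0$. Then the sequences $(\psi_n^{+}(z))_{n\ge-1}$ and $(\psi_n^{-}(z))_{n\ge-1}$ are both solutions of the difference equation \[ \psi_{n-1}-(z+z^{-1})\frac{1-\beta q^n}{1-\alpha q^n}\psi_n+\psi_{n+1}=0,\qquad n\in\mathbb{N}_0. \] Moreover, their Wronskian $W(\psi^+,\psi^-):=\psi_n^+(z)\psi_{n+1}^-(z)-\psi_{n+1}^+(z)\psi_n^-(z)$ (which is independent of $n$) equals \[ W(\psi^+,\psi^-)=z^{-1}\left(z^2,qz^{-2};q\right)_\infty. \] Consequently, $\psi^{+}(z)$ and $\psi^-(z)$ are linearly independent if and only if $z\notin\pm q^{\mathbb{Z}/2}$.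
   Context: For $a\in\mathbb{C}$ and $n\in\mathbb{N}_0\cup\{\infty\}$, $(a;q)_n:=\prod_{j=0}^{n-1}(1-aq^j)$ and $(a_1,\dots,a_r;q)_n:=\prod_i(a_i;q)_n$. For $z\neq0$ define $c_k(z):=\prod_{j=0}^{k-1}\bigl(\alpha(1+z^2q^{2j})-\beta q^j(1+z^2)\bigr)$ (this equals $\alpha^k(z\tau,z\tau^{-1};q)_k$ for any $\tau\ne0$ with $\alpha(\tau+\tau^{-1})=\beta(z+z^{-1})$), and for integers $n\ge-1$, \[ \psi_n^{+}(z):=z^{n}\sum_{k=0}^{\infty}\frac{(q^{k+1}z^{2};q)_\infty}{(q;q)_k}\,c_k(z)\,q^{(n+1)k},\qquad \psi_n^-(z):=\psi_n^+(z^{-1}). \] When $z^2\notin q^{-\mathbb{N}}$ this is $\psi_n^+(z)=z^n(qz^2;q)_\infty\,{}_2\phi_1(z\tau,z\tau^{-1};qz^2;q,\alpha q^{n+1})$, where ${}_2\phi_1(a,b;c;q,w)=\sum_{k\ge0}\frac{(a,b;q)_k}{(c,q;q)_k}w^k$. $q^{\mathbb{Z}/2}$ denotes $\{q^{j/2}:j\in\mathbb{Z}\}$. *)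

theory Defs
  imports "HOL-Analysis.Analysis"
begin

definition qpoch :: "complex \<Rightarrow> real \<Rightarrow> nat \<Rightarrow> complex" where
  "qpoch a q n = (\<Prod>j<n. 1 - a * of_real q ^ j)"

definition qpoch_inf :: "complex \<Rightarrow> real \<Rightarrow> complex" where
  "qpoch_inf a q = (\<Prod>j. 1 - a * of_real q ^ j)"

definition ck :: "real \<Rightarrow> complex \<Rightarrow> complex \<Rightarrow> nat \<Rightarrow> complex \<Rightarrow> complex" where
  "ck q \<alpha> \<beta> k z = (\<Prod>j<k. \<alpha> * (1 + z^2 * of_real q ^ (2*j)) - \<beta> * of_real q ^ j * (1 + z^2))"

text \<open>psi^+_n(z) for integers n >= -1 (the formula is used for all integers n).\<close>
definition psi_plus :: "real \<Rightarrow> complex \<Rightarrow> complex \<Rightarrow> int \<Rightarrow> complex \<Rightarrow> complex" where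
  "psi_plus q \<alpha> \<beta> n z = z powi n *
     (\<Sum>k. qpoch_inf (of_real q ^ (k+1) * z^2) q / qpoch (of_real q) q k
            * ck q \<alpha> \<beta> k z * of_real q powi ((n+1) * int k))"

definition psi_minus :: "real \<Rightarrow> complex \<Rightarrow> complex \<Rightarrow> int \<Rightarrow> complex \<Rightarrow> complex" where
  "psi_minus q \<alpha> \<beta> n z = psi_plus q \<alpha> \<beta> n (inverse z)"

end

theory Submission
  imports Defs
begin

(* Write psi+_n(z) = z^n G(q^(n+1)) with the power series G(x) = sum_k t_k x^k, t_k the k-th
   summand of psi+ at n = -1. The coefficients obey the first-order relation
   t_(k+1) (1 - q^(k+1)) (1 - z^2 q^(k+1)) = t_k d_k, d_k the k-th factor of c_k(z). Since d_k -> alpha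
   with |alpha| < 1, the ratio test makes sum_k t_k absolutely convergent, and summing the relation
   against x^(k+1) yields the q-difference equation
   (1 - alpha x) (G(x) + z^2 G(q^2 x)) = (1 + z^2) (1 - beta x) G(q x),
   which at x = q^n is the three-term recurrence; psi- = psi+ at 1/z solves the same recurrence.
   The Casoratian of two solutions is constant in n, so it equals its limit as n -> oo; there
   G(q^n) -> t_0 = (q z^2; q)_oo, which gives z^(-1) (1 - z^2) (q z^2, q z^(-2); q)_oo. Two solutions
   are independent iff their Casoratian is nonzero, and this theta product vanishes iff z^2 is
   an integral power of q. *)

section \<open>q-Pochhammer symbols\<close>

lemma qpoch_inf_has_prod:
  assumes "\<bar>q\<bar> < 1"
  shows "(\<lambda>j. 1 - a * of_real q ^ j) has_prod qpoch_inf a q"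
proof -
  have "summable (\<lambda>j. norm ((1 - a * of_real q ^ j) - 1))"
    using assms by (simp add: norm_mult norm_power summable_mult summable_geometric)
  then show ?thesis
    unfolding qpoch_inf_def
    by (intro convergent_prod_has_prod abs_convergent_prod_imp_convergent_prod
        summable_imp_abs_convergent_prod)
qed

lemma qpoch_inf_shift:
  assumes "\<bar>q\<bar> < 1"
  shows "qpoch_inf a q = (1 - a) * qpoch_inf (a * of_real q) q"
proof -
  have "convergent_prod (\<lambda>j. 1 - a * of_real q ^ j)"
    using qpoch_inf_has_prod[OF assms] has_prod_iff by blast
  from has_prod_ignore_initial_segment'[OF this, of 1]
  have "(\<lambda>j. 1 - a * of_real q ^ j) has_prod ((1 - a) * (\<Prod>j. 1 - a * of_real q ^ Suc j))"
    by simp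
  also have "(\<Prod>j. 1 - a * of_real q ^ Suc j) = qpoch_inf (a * of_real q) q"
    by (simp add: qpoch_inf_def mult.assoc)
  finally show ?thesis
    by (rule has_prod_unique2[OF qpoch_inf_has_prod[OF assms]])
qed

lemma qpoch_inf_eq_0_iff:
  assumes "\<bar>q\<bar> < 1"
  shows "qpoch_inf a q = 0 \<longleftrightarrow> (\<exists>j. a * of_real q ^ j = 1)"
proof -
  have "qpoch_inf a q = 0 \<longleftrightarrow> (\<exists>j. 0 = 1 - a * of_real q ^ j)"
    using has_prod_eq_0_iff[OF qpoch_inf_has_prod[OF assms]] by (simp add: image_iff)
  also have "\<dots> \<longleftrightarrow> (\<exists>j. a * of_real q ^ j = 1)"
    by (metis eq_iff_diff_eq_0)
  finally show ?thesis .
qed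

lemma qpoch_q_nonzero:
  assumes "\<bar>q\<bar> < 1"
  shows "qpoch (of_real q) q k \<noteq> 0"
proof -
  have "\<bar>q\<bar> * \<bar>q\<bar> ^ j \<le> \<bar>q\<bar>" for j
    using assms by (simp add: mult_left_le power_le_one)
  with assms have "norm (of_real q * of_real q ^ j :: complex) < 1" for j
    by (simp add: norm_mult norm_power) (meson le_less_trans)
  then have "of_real q * of_real q ^ j \<noteq> (1 :: complex)" for j
    by (metis norm_one less_irrefl)
  then show ?thesis
    by (auto simp: qpoch_def)
qed

lemma qpoch_inf_theta_eq_0_iff:
  assumes "q \<noteq> 0" "\<bar>q\<bar> < 1" "w \<noteq> 0"
  shows "qpoch_inf w q * qpoch_inf (of_real q * inverse w) q = 0 \<longleftrightarrow> (\<exists>j. w = of_real q powi j)"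
proof -
  have nonpos: "w * of_real q ^ k = 1 \<longleftrightarrow> w = of_real q powi (- int k)" for k
    using assms(1) by (simp add: power_int_minus field_simps)
  have pos: "of_real q * inverse w * of_real q ^ k = 1 \<longleftrightarrow> w = of_real q powi int (Suc k)" for k
  proof -
    have "of_real q powi int (Suc k) = of_real q * (of_real q ^ k :: complex)"
      by (simp only: power_int_of_nat power_Suc)
    then show ?thesis
      using assms(3) by (auto simp: field_simps)
  qed
  have "qpoch_inf w q * qpoch_inf (of_real q * inverse w) q = 0
      \<longleftrightarrow> (\<exists>k. w * of_real q ^ k = 1) \<or> (\<exists>k. of_real q * inverse w * of_real q ^ k = 1)"
    by (simp add: qpoch_inf_eq_0_iff[OF assms(2)])
  also have "\<dots> \<longleftrightarrow> (\<exists>k. w = of_real q powi (- int k)) \<or> (\<exists>k. w = of_real q powi int (Suc k))"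
    by (simp only: nonpos pos)
  also have "\<dots> \<longleftrightarrow> (\<exists>j. w = of_real q powi j)"
  proof
    assume "\<exists>j. w = of_real q powi j"
    then obtain j where j: "w = of_real q powi j" ..
    show "(\<exists>k. w = of_real q powi (- int k)) \<or> (\<exists>k. w = of_real q powi int (Suc k))"
    proof (cases "j \<le> 0")
      case True
      then have "j = - int (nat (- j))"
        by simp
      with j show ?thesis
        by metis
    next
      case False
      then have "j = int (Suc (nat (j - 1)))"
        by simp
      with j show ?thesis
        by metis
    qed
  qed blast
  finally show ?thesis .
qed

lemma eq_pm_powr_half_iff:
  fixes z :: complex
  assumes "0 < q"
  shows "(z = of_real (q powr (of_int j / 2)) \<or> z = - of_real (q powr (of_int j / 2)))
     \<longleftrightarrow> z^2 = of_real q powi j"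
proof -
  have "(q powr (of_int j / 2))^2 = q powr of_int j"
    by (simp add: power2_eq_square flip: powr_add)
  also have "\<dots> = q powi j"
    using assms by (simp add: powr_real_of_int')
  finally have "(of_real (q powr (of_int j / 2)) :: complex)^2 = of_real q powi j"
    by (metis of_real_power of_real_power_int)
  then show ?thesis
    by (metis power2_eq_iff)
qed

section \<open>Three-term recurrences\<close>

definition solves_recurrence :: "(int \<Rightarrow> 'a::comm_ring) \<Rightarrow> (int \<Rightarrow> 'a) \<Rightarrow> bool" where
  "solves_recurrence c y \<longleftrightarrow> (\<forall>n\<ge>0. y (n-1) - c n * y n + y (n+1) = 0)"

definition casoratian :: "(int \<Rightarrow> 'a::comm_ring) \<Rightarrow> (int \<Rightarrow> 'a) \<Rightarrow> int \<Rightarrow> 'a" where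
  "casoratian y w n = y n * w (n+1) - y (n+1) * w n"

lemma solves_recurrence_step:
  assumes "solves_recurrence c y" "n \<ge> -1"
  shows "y (n+1+1) = c (n+1) * y (n+1) - y n"
proof -
  have "0 \<le> n+1 \<longrightarrow> y (n+1-1) - c (n+1) * y (n+1) + y (n+1+1) = 0"
    using assms(1) unfolding solves_recurrence_def by (rule spec)
  with assms(2) show ?thesis
    by (simp add: algebra_simps)
qed

lemma casoratian_step:
  assumes "solves_recurrence c y" "solves_recurrence c w" "n \<ge> -1"
  shows "casoratian y w (n+1) = casoratian y w n"
  unfolding casoratian_def solves_recurrence_step[OF assms(1,3)] solves_recurrence_step[OF assms(2,3)]
  by (simp add: algebra_simps)

lemma casoratian_const:
  assumes "solves_recurrence c y" "solves_recurrence c w" "n \<ge> -1"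
  shows "casoratian y w n = casoratian y w (-1)"
  using assms(3)
proof (induction n rule: int_ge_induct)
  case (step n)
  then show ?case
    using casoratian_step[OF assms(1,2)] by simp
qed simp

lemma solves_recurrence_lincomb:
  assumes "solves_recurrence c y" "solves_recurrence c w"
  shows "solves_recurrence c (\<lambda>n. a * y n + b * w n)"
proof -
  have "a * y (n-1) + b * w (n-1) - c n * (a * y n + b * w n) + (a * y (n+1) + b * w (n+1))
      = a * (y (n-1) - c n * y n + y (n+1)) + b * (w (n-1) - c n * w n + w (n+1))" for n
    by (simp add: algebra_simps)
  with assms show ?thesis
    by (simp add: solves_recurrence_def)
qed

lemma solves_recurrence_eq_0:
  assumes "solves_recurrence c y" "y (-1) = 0" "y 0 = 0" "n \<ge> -1"
  shows "y n = 0"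
proof -
  have "y n = 0 \<and> y (n+1) = 0"
    using assms(4)
  proof (induction n rule: int_ge_induct)
    case (step n)
    then show ?case
      using solves_recurrence_step[OF assms(1) step.hyps(1)] by simp
  qed (use assms(2,3) in simp)
  then show ?thesis ..
qed

lemma singular_2x2_nontrivial_kernel:
  fixes a b c d :: "'a::field"
  assumes "a * d - b * c = 0"
  obtains u v where "u \<noteq> 0 \<or> v \<noteq> 0" "u * a + v * b = 0" "u * c + v * d = 0"
proof -
  consider "a \<noteq> 0 \<or> b \<noteq> 0" | "a = 0" "b = 0" "c \<noteq> 0 \<or> d \<noteq> 0" | "a = 0" "b = 0" "c = 0" "d = 0"
    by blast
  then show ?thesis
  proof cases
    case 1
    have "b * c + - a * d = 0"
      using assms by (simp add: algebra_simps)
    with 1 show ?thesis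
      by (intro that[of b "- a"]) (auto simp: mult.commute)
  next
    case 2
    then show ?thesis
      by (intro that[of d "- c"]) (auto simp: mult.commute)
  next
    case 3
    then show ?thesis
      by (intro that[of 1 0]) simp_all
  qed
qed

lemma solutions_independent_iff_casoratian_nonzero:
  fixes y w :: "int \<Rightarrow> 'a::field"
  assumes "solves_recurrence c y" "solves_recurrence c w"
  shows "(\<forall>a b. (\<forall>n\<ge>-1. a * y n + b * w n = 0) \<longrightarrow> a = 0 \<and> b = 0)
     \<longleftrightarrow> casoratian y w (-1) \<noteq> 0"
proof
  assume indep: "\<forall>a b. (\<forall>n\<ge>-1. a * y n + b * w n = 0) \<longrightarrow> a = 0 \<and> b = 0"
  show "casoratian y w (-1) \<noteq> 0"
  proof
    assume "casoratian y w (-1) = 0"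
    then have "y (-1) * w 0 - w (-1) * y 0 = 0"
      by (simp add: casoratian_def mult.commute)
    then obtain a b where ab: "a \<noteq> 0 \<or> b \<noteq> 0" "a * y (-1) + b * w (-1) = 0" "a * y 0 + b * w 0 = 0"
      by (rule singular_2x2_nontrivial_kernel)
    have "\<forall>n\<ge>-1. a * y n + b * w n = 0"
      using solves_recurrence_eq_0[OF solves_recurrence_lincomb[OF assms]] ab(2,3) by blast
    with indep ab(1) show False
      by blast
  qed
next
  assume nonzero: "casoratian y w (-1) \<noteq> 0"
  show "\<forall>a b. (\<forall>n\<ge>-1. a * y n + b * w n = 0) \<longrightarrow> a = 0 \<and> b = 0"
  proof (intro allI impI)
    fix a b assume "\<forall>n\<ge>-1. a * y n + b * w n = 0"
    then have "a * y (-1) + b * w (-1) = 0" "a * y 0 + b * w 0 = 0"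
      by auto
    moreover have "a * casoratian y w (-1) = w 0 * (a * y (-1) + b * w (-1)) - w (-1) * (a * y 0 + b * w 0)"
      "b * casoratian y w (-1) = y (-1) * (a * y 0 + b * w 0) - y 0 * (a * y (-1) + b * w (-1))"
      by (simp_all add: casoratian_def algebra_simps)
    ultimately have "a * casoratian y w (-1) = 0" "b * casoratian y w (-1) = 0"
      by simp_all
    with nonzero show "a = 0 \<and> b = 0"
      by simp
  qed
qed

section \<open>The power series behind psi\<close>

lemma summable_norm_of_ratio_limit:
  fixes t a b :: "nat \<Rightarrow> 'a::real_normed_field"
  assumes ratio: "\<And>k. t (Suc k) * b k = t k * a k"
    and a: "a \<longlonglongrightarrow> A" and b: "b \<longlonglongrightarrow> B" and AB: "norm A < norm B"
  shows "summable (\<lambda>k. norm (t k))"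
proof -
  define r where "r = (1 + norm A / norm B) / 2"
  have "norm B > 0"
    using AB norm_ge_zero[of A] by linarith
  then have r: "0 < r" "r < 1" "norm A < r * norm B"
    using AB by (simp_all add: r_def add_nonneg_pos field_simps)
  have "(\<lambda>k. norm (a k) - r * norm (b k)) \<longlonglongrightarrow> norm A - r * norm B"
    by (intro tendsto_intros a b)
  then have "eventually (\<lambda>k. norm (a k) - r * norm (b k) < 0) sequentially"
    using r(3) by (intro order_tendstoD(2)) auto
  then obtain N where N: "\<And>k. k \<ge> N \<Longrightarrow> norm (a k) < r * norm (b k)"
    unfolding eventually_sequentially by force
  show ?thesis
  proof (rule summable_ratio_test[OF r(2), of N])
    fix k assume "k \<ge> N"
    then have ab: "norm (a k) < r * norm (b k)"
      by (rule N)
    then have "norm (b k) > 0"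
      using r(1) norm_ge_zero[of "a k"] by (meson le_less_trans zero_less_mult_pos)
    have "norm (t (Suc k)) * norm (b k) = norm (t k) * norm (a k)"
      by (metis ratio norm_mult)
    also have "\<dots> \<le> r * norm (t k) * norm (b k)"
      using mult_right_mono[OF less_imp_le[OF ab] norm_ge_zero[of "t k"]] by (simp add: mult_ac)
    finally show "norm (norm (t (Suc k))) \<le> r * norm (norm (t k))"
      using \<open>norm (b k) > 0\<close> by simp
  qed
qed

definition psi_coeff :: "real \<Rightarrow> complex \<Rightarrow> complex \<Rightarrow> complex \<Rightarrow> nat \<Rightarrow> complex" where
  "psi_coeff q \<alpha> \<beta> z k = qpoch_inf (of_real q ^ (k+1) * z^2) q / qpoch (of_real q) q k * ck q \<alpha> \<beta> k z"

definition psi_gf :: "real \<Rightarrow> complex \<Rightarrow> complex \<Rightarrow> complex \<Rightarrow> complex \<Rightarrow> complex" where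
  "psi_gf q \<alpha> \<beta> z x = (\<Sum>k. psi_coeff q \<alpha> \<beta> z k * x ^ k)"

lemma psi_plus_eq_psi_gf:
  assumes "n \<ge> -1"
  shows "psi_plus q \<alpha> \<beta> n z = z powi n * psi_gf q \<alpha> \<beta> z (of_real q ^ nat (n+1))"
proof -
  have "(n+1) * int k = int (nat (n+1) * k)" for k
    using assms by simp
  then have "(of_real q :: complex) powi ((n+1) * int k) = (of_real q ^ nat (n+1)) ^ k" for k
    by (simp only: power_int_of_nat power_mult)
  then show ?thesis
    by (simp add: psi_plus_def psi_gf_def psi_coeff_def)
qed

lemma psi_coeff_0: "psi_coeff q \<alpha> \<beta> z 0 = qpoch_inf (of_real q * z^2) q"
  by (simp add: psi_coeff_def qpoch_def ck_def)

lemma psi_coeff_Suc: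
  assumes "\<bar>q\<bar> < 1"
  shows "psi_coeff q \<alpha> \<beta> z (Suc k) * ((1 - of_real q ^ Suc k) * (1 - z^2 * of_real q ^ Suc k))
       = psi_coeff q \<alpha> \<beta> z k * (\<alpha> * (1 + z^2 * of_real q ^ (2*k)) - \<beta> * of_real q ^ k * (1 + z^2))"
proof -
  define u where "u = (of_real q :: complex) ^ Suc k"
  define d where "d = \<alpha> * (1 + z^2 * of_real q ^ (2*k)) - \<beta> * of_real q ^ k * (1 + z^2)"
  define P where "P = qpoch_inf (of_real q ^ (Suc k + 1) * z^2) q"
  define Q where "Q = qpoch (of_real q) q k"
  have shift: "qpoch_inf (of_real q ^ (k+1) * z^2) q = (1 - u * z^2) * P"
    using qpoch_inf_shift[OF assms, of "of_real q ^ (k+1) * z^2"] by (simp add: u_def P_def mult_ac)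
  have Q_Suc: "qpoch (of_real q) q (Suc k) = Q * (1 - u)"
    by (simp add: qpoch_def Q_def u_def)
  have ck_Suc: "ck q \<alpha> \<beta> (Suc k) z = ck q \<alpha> \<beta> k z * d"
    by (simp add: ck_def d_def)
  have nonzero: "Q \<noteq> 0" "1 - u \<noteq> 0"
    using qpoch_q_nonzero[OF assms, of k] qpoch_q_nonzero[OF assms, of "Suc k"]
    by (auto simp: Q_Suc Q_def)
  have coeff_Suc: "psi_coeff q \<alpha> \<beta> z (Suc k) = P / (Q * (1 - u)) * (ck q \<alpha> \<beta> k z * d)"
    unfolding psi_coeff_def Q_Suc ck_Suc P_def[symmetric] ..
  have coeff: "psi_coeff q \<alpha> \<beta> z k = (1 - u * z^2) * P / Q * ck q \<alpha> \<beta> k z"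
    unfolding psi_coeff_def shift Q_def[symmetric] ..
  show ?thesis
    unfolding u_def[symmetric] d_def[symmetric] coeff_Suc coeff
    using nonzero by (simp add: field_simps)
qed

lemma summable_norm_psi_coeff:
  assumes "\<bar>q\<bar> < 1" "norm \<alpha> < 1"
  shows "summable (\<lambda>k. norm (psi_coeff q \<alpha> \<beta> z k))"
proof (rule summable_norm_of_ratio_limit[where t = "psi_coeff q \<alpha> \<beta> z"])
  show "psi_coeff q \<alpha> \<beta> z (Suc k) * ((1 - of_real q ^ Suc k) * (1 - z^2 * of_real q ^ Suc k))
       = psi_coeff q \<alpha> \<beta> z k * (\<alpha> * (1 + z^2 * of_real q ^ (2*k)) - \<beta> * of_real q ^ k * (1 + z^2))"
    for k by (rule psi_coeff_Suc[OF assms(1)])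
  have q: "(\<lambda>k. (of_real q :: complex) ^ k) \<longlonglongrightarrow> 0"
    using assms(1) by (intro LIMSEQ_power_zero) simp
  have q2: "(\<lambda>k. (of_real q :: complex) ^ (2*k)) \<longlonglongrightarrow> 0"
    using assms(1) unfolding power_mult by (intro LIMSEQ_power_zero) (simp add: norm_power abs_square_less_1)
  have "(\<lambda>k. \<alpha> * (1 + z^2 * of_real q ^ (2*k)) - \<beta> * of_real q ^ k * (1 + z^2))
      \<longlonglongrightarrow> \<alpha> * (1 + z^2 * 0) - \<beta> * 0 * (1 + z^2)"
    by (intro tendsto_intros q q2)
  then show "(\<lambda>k. \<alpha> * (1 + z^2 * of_real q ^ (2*k)) - \<beta> * of_real q ^ k * (1 + z^2)) \<longlonglongrightarrow> \<alpha>"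
    by simp
  have "(\<lambda>k. (1 - of_real q ^ Suc k) * (1 - z^2 * of_real q ^ Suc k)) \<longlonglongrightarrow> (1 - 0) * (1 - z^2 * 0)"
    by (intro tendsto_intros LIMSEQ_Suc[OF q])
  then show "(\<lambda>k. (1 - of_real q ^ Suc k) * (1 - z^2 * of_real q ^ Suc k)) \<longlonglongrightarrow> 1"
    by simp
  show "norm \<alpha> < norm (1::complex)"
    using assms(2) by simp
qed

lemma summable_psi_gf:
  assumes "\<bar>q\<bar> < 1" "norm \<alpha> < 1" "norm x \<le> 1"
  shows "summable (\<lambda>k. psi_coeff q \<alpha> \<beta> z k * x ^ k)"
proof (rule summable_comparison_test[OF _ summable_norm_psi_coeff[OF assms(1,2)]])
  have "norm (psi_coeff q \<alpha> \<beta> z k * x ^ k) \<le> norm (psi_coeff q \<alpha> \<beta> z k)" for k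
    using assms(3) by (simp add: norm_mult norm_power mult_left_le power_le_one)
  then show "\<exists>N. \<forall>k\<ge>N. norm (psi_coeff q \<alpha> \<beta> z k * x ^ k) \<le> norm (psi_coeff q \<alpha> \<beta> z k)"
    by blast
qed

lemma psi_gf_tendsto:
  assumes "\<bar>q\<bar> < 1" "norm \<alpha> < 1"
  shows "(\<lambda>m. psi_gf q \<alpha> \<beta> z (of_real q ^ m)) \<longlonglongrightarrow> qpoch_inf (of_real q * z^2) q"
proof -
  have "isCont (psi_gf q \<alpha> \<beta> z) 0"
    unfolding psi_gf_def
    by (rule isCont_powser[of _ 1]) (use summable_psi_gf[OF assms, of 1] in simp_all)
  moreover have "(\<lambda>m. (of_real q :: complex) ^ m) \<longlonglongrightarrow> 0"
    using assms(1) by (intro LIMSEQ_power_zero) simp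
  ultimately have "(\<lambda>m. psi_gf q \<alpha> \<beta> z (of_real q ^ m)) \<longlonglongrightarrow> psi_gf q \<alpha> \<beta> z 0"
    by (rule isCont_tendsto_compose)
  then show ?thesis
    by (simp add: psi_gf_def psi_coeff_0)
qed

lemma psi_gf_sums_quadratic:
  assumes "\<bar>q\<bar> < 1" "norm \<alpha> < 1" "norm x \<le> 1"
  shows "(\<lambda>k. psi_coeff q \<alpha> \<beta> z k * x ^ k * (A + B * of_real q ^ k + C * of_real q ^ (2*k)))
           sums (A * psi_gf q \<alpha> \<beta> z x + B * psi_gf q \<alpha> \<beta> z (of_real q * x)
                 + C * psi_gf q \<alpha> \<beta> z (of_real q ^ 2 * x))"
proof -
  have series: "(\<lambda>k. psi_coeff q \<alpha> \<beta> z k * w ^ k) sums psi_gf q \<alpha> \<beta> z w" if "norm w \<le> 1" for w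
    unfolding psi_gf_def using summable_psi_gf[OF assms(1,2) that] by (rule summable_sums)
  have "norm (of_real q * x) \<le> 1" "norm (of_real q ^ 2 * x) \<le> 1"
    using assms(1,3) mult_le_one[of "\<bar>q\<bar>" "norm x"] mult_le_one[of "\<bar>q\<bar>^2" "norm x"]
    by (simp_all add: norm_mult norm_power abs_square_le_1)
  from series[OF assms(3)] series[OF this(1)] series[OF this(2)]
  have "(\<lambda>k. A * (psi_coeff q \<alpha> \<beta> z k * x ^ k) + B * (psi_coeff q \<alpha> \<beta> z k * (of_real q * x) ^ k)
            + C * (psi_coeff q \<alpha> \<beta> z k * (of_real q ^ 2 * x) ^ k))
        sums (A * psi_gf q \<alpha> \<beta> z x + B * psi_gf q \<alpha> \<beta> z (of_real q * x)
              + C * psi_gf q \<alpha> \<beta> z (of_real q ^ 2 * x))"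
    by (intro sums_add sums_mult)
  then show ?thesis
    by (simp add: power_mult_distrib algebra_simps flip: power_mult)
qed

(* Both sides of the q-difference equation are sum_k t_k x^k (1 - q^k) (1 - z^2 q^k): the left one
   directly, the right one after dropping the vanishing 0-th term and applying psi_coeff_Suc. *)
lemma psi_gf_recurrence:
  assumes "\<bar>q\<bar> < 1" "norm \<alpha> < 1" "norm x \<le> 1"
  shows "(1 - \<alpha> * x) * (psi_gf q \<alpha> \<beta> z x + z^2 * psi_gf q \<alpha> \<beta> z (of_real q ^ 2 * x))
       = (1 + z^2) * (1 - \<beta> * x) * psi_gf q \<alpha> \<beta> z (of_real q * x)"
proof -
  define G where "G = psi_gf q \<alpha> \<beta> z"
  define t where "t = (\<lambda>k. psi_coeff q \<alpha> \<beta> z k * x ^ k)"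
  define f where "f = (\<lambda>k. t k * ((1 - of_real q ^ k) * (1 - z^2 * of_real q ^ k)))"
  have "(1 - of_real q ^ k) * (1 - z^2 * of_real q ^ k)
      = 1 + (- (1 + z^2)) * of_real q ^ k + z^2 * of_real q ^ (2*k)" for k
    by (simp add: algebra_simps power_mult mult.commute[of 2] power2_eq_square)
  then have "f sums (G x + (- (1 + z^2)) * G (of_real q * x) + z^2 * G (of_real q ^ 2 * x))"
    using psi_gf_sums_quadratic[OF assms, where A = 1 and B = "- (1 + z^2)" and C = "z^2"]
    by (simp add: f_def t_def G_def)
  moreover have "f sums (x * (\<alpha> * G x + (- \<beta> * (1 + z^2)) * G (of_real q * x) + \<alpha> * z^2 * G (of_real q ^ 2 * x)))"
  proof -
    have "f (Suc k) = x * (t k * (\<alpha> + (- \<beta> * (1 + z^2)) * of_real q ^ k + \<alpha> * z^2 * of_real q ^ (2*k)))" for k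
    proof -
      have "f (Suc k)
          = psi_coeff q \<alpha> \<beta> z (Suc k) * ((1 - of_real q ^ Suc k) * (1 - z^2 * of_real q ^ Suc k)) * x ^ Suc k"
        by (simp add: f_def t_def mult_ac)
      also have "\<dots> = psi_coeff q \<alpha> \<beta> z k
          * (\<alpha> * (1 + z^2 * of_real q ^ (2*k)) - \<beta> * of_real q ^ k * (1 + z^2)) * x ^ Suc k"
        by (simp only: psi_coeff_Suc[OF assms(1)])
      finally show ?thesis
        by (simp add: t_def algebra_simps)
    qed
    then have "(\<lambda>k. f (Suc k))
        sums (x * (\<alpha> * G x + (- \<beta> * (1 + z^2)) * G (of_real q * x) + \<alpha> * z^2 * G (of_real q ^ 2 * x)))"
      using sums_mult[OF psi_gf_sums_quadratic[OF assms, where A = \<alpha> and B = "- \<beta> * (1 + z^2)" and C = "\<alpha> * z^2"], of x]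
      by (simp add: t_def G_def)
    moreover have "f 0 = 0"
      by (simp add: f_def)
    ultimately show ?thesis
      by (simp add: sums_Suc_iff)
  qed
  ultimately have "G x + (- (1 + z^2)) * G (of_real q * x) + z^2 * G (of_real q ^ 2 * x)
      = x * (\<alpha> * G x + (- \<beta> * (1 + z^2)) * G (of_real q * x) + \<alpha> * z^2 * G (of_real q ^ 2 * x))"
    by (rule sums_unique2)
  then show ?thesis
    unfolding G_def[symmetric] by (simp add: algebra_simps)
qed

lemma solves_recurrence_psi_plus:
  assumes "\<bar>q\<bar> < 1" "norm \<alpha> < 1" "z \<noteq> 0"
  shows "solves_recurrence
           (\<lambda>n. (z + inverse z) * (1 - \<beta> * of_real q powi n) / (1 - \<alpha> * of_real q powi n))
           (\<lambda>n. psi_plus q \<alpha> \<beta> n z)"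
  unfolding solves_recurrence_def
proof (intro allI impI)
  fix n :: int
  assume "n \<ge> 0"
  then obtain m where n: "n = int m"
    using nonneg_int_cases by blast
  define G where "G = psi_gf q \<alpha> \<beta> z"
  define x where "x = (of_real q :: complex) ^ m"
  define w where "w = z powi (n - 1)"
  have "norm x \<le> 1"
    using assms(1) by (simp add: x_def norm_power power_le_one)
  then have "norm (\<alpha> * x) < 1"
    using assms(2) mult_left_le[of "norm x" "norm \<alpha>"] by (simp add: norm_mult)
  then have nonzero: "1 - \<alpha> * x \<noteq> 0"
    by auto
  have rec: "(1 - \<alpha> * x) * (G x + z^2 * G (of_real q ^ 2 * x)) = (1 + z^2) * (1 - \<beta> * x) * G (of_real q * x)"
    unfolding G_def by (rule psi_gf_recurrence[OF assms(1,2) \<open>norm x \<le> 1\<close>])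
  have "z powi n = w * z" "z powi (n+1) = w * z^2"
    using assms(3) by (simp_all add: w_def power_int_diff power_int_add power2_eq_square)
  moreover have "of_real q ^ nat (n-1+1) = x" "of_real q ^ nat (n+1) = of_real q * x"
      "of_real q ^ nat (n+1+1) = of_real q ^ 2 * x"
    by (simp_all add: n x_def nat_add_distrib power2_eq_square mult.assoc)
  ultimately have psi: "psi_plus q \<alpha> \<beta> (n-1) z = w * G x"
      "psi_plus q \<alpha> \<beta> n z = w * z * G (of_real q * x)"
      "psi_plus q \<alpha> \<beta> (n+1) z = w * z^2 * G (of_real q ^ 2 * x)"
    using psi_plus_eq_psi_gf[of "n-1"] psi_plus_eq_psi_gf[of n] psi_plus_eq_psi_gf[of "n+1"] \<open>n \<ge> 0\<close>
    by (simp_all add: w_def G_def)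
  have "of_real q powi n = x"
    by (simp add: n x_def)
  then have "psi_plus q \<alpha> \<beta> (n-1) z
      - (z + inverse z) * (1 - \<beta> * of_real q powi n) / (1 - \<alpha> * of_real q powi n) * psi_plus q \<alpha> \<beta> n z
      + psi_plus q \<alpha> \<beta> (n+1) z
    = w / (1 - \<alpha> * x) * ((1 - \<alpha> * x) * (G x + z^2 * G (of_real q ^ 2 * x))
                            - (1 + z^2) * (1 - \<beta> * x) * G (of_real q * x))" (is "?lhs = _")
    unfolding psi using nonzero assms(3) by (simp add: field_simps power2_eq_square)
  also have "\<dots> = 0"
    by (simp add: rec)
  finally show "?lhs = 0" .
qed

lemma solves_recurrence_psi_minus:
  assumes "\<bar>q\<bar> < 1" "norm \<alpha> < 1" "z \<noteq> 0"
  shows "solves_recurrence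
           (\<lambda>n. (z + inverse z) * (1 - \<beta> * of_real q powi n) / (1 - \<alpha> * of_real q powi n))
           (\<lambda>n. psi_minus q \<alpha> \<beta> n z)"
  using solves_recurrence_psi_plus[OF assms(1,2), of "inverse z" \<beta>] assms(3)
  by (simp add: psi_minus_def add.commute)

lemma casoratian_psi_int:
  assumes "z \<noteq> 0"
  shows "casoratian (\<lambda>n. psi_plus q \<alpha> \<beta> n z) (\<lambda>n. psi_minus q \<alpha> \<beta> n z) (int m)
       = inverse z * psi_gf q \<alpha> \<beta> z (of_real q ^ Suc m) * psi_gf q \<alpha> \<beta> (inverse z) (of_real q ^ Suc (Suc m))
         - z * psi_gf q \<alpha> \<beta> z (of_real q ^ Suc (Suc m)) * psi_gf q \<alpha> \<beta> (inverse z) (of_real q ^ Suc m)"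
proof -
  define Gp where "Gp k = psi_gf q \<alpha> \<beta> z (of_real q ^ k)" for k
  define Gm where "Gm k = psi_gf q \<alpha> \<beta> (inverse z) (of_real q ^ k)" for k
  have psi: "psi_plus q \<alpha> \<beta> (int k) z = z ^ k * Gp (Suc k)"
      "psi_minus q \<alpha> \<beta> (int k) z = inverse z ^ k * Gm (Suc k)" for k
    by (simp_all add: psi_minus_def psi_plus_eq_psi_gf Gp_def Gm_def nat_add_distrib)
  have "int (Suc m) = int m + 1"
    by simp
  then have "casoratian (\<lambda>n. psi_plus q \<alpha> \<beta> n z) (\<lambda>n. psi_minus q \<alpha> \<beta> n z) (int m)
      = z ^ m * Gp (Suc m) * (inverse z ^ Suc m * Gm (Suc (Suc m)))
        - z ^ Suc m * Gp (Suc (Suc m)) * (inverse z ^ m * Gm (Suc m))"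
    using psi[of m] psi[of "Suc m"] by (simp only: casoratian_def)
  also have "\<dots> = inverse z * Gp (Suc m) * Gm (Suc (Suc m)) - z * Gp (Suc (Suc m)) * Gm (Suc m)"
    using assms by (simp add: power_inverse field_simps)
  finally show ?thesis
    by (simp only: Gp_def Gm_def)
qed

lemma casoratian_psi:
  assumes "\<bar>q\<bar> < 1" "norm \<alpha> < 1" "z \<noteq> 0"
  shows "casoratian (\<lambda>n. psi_plus q \<alpha> \<beta> n z) (\<lambda>n. psi_minus q \<alpha> \<beta> n z) (-1)
       = inverse z * qpoch_inf (z^2) q * qpoch_inf (of_real q * inverse (z^2)) q"
proof -
  define C where "C = casoratian (\<lambda>n. psi_plus q \<alpha> \<beta> n z) (\<lambda>n. psi_minus q \<alpha> \<beta> n z)"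
  define Gp where "Gp m = psi_gf q \<alpha> \<beta> z (of_real q ^ m)" for m
  define Gm where "Gm m = psi_gf q \<alpha> \<beta> (inverse z) (of_real q ^ m)" for m
  define Tp where "Tp = qpoch_inf (of_real q * z^2) q"
  define Tm where "Tm = qpoch_inf (of_real q * inverse (z^2)) q"
  have "C (int m) = C (-1)" for m
    unfolding C_def
    by (rule casoratian_const[OF solves_recurrence_psi_plus[OF assms] solves_recurrence_psi_minus[OF assms]]) simp
  then have "C (-1) = inverse z * Gp (Suc m) * Gm (Suc (Suc m)) - z * Gp (Suc (Suc m)) * Gm (Suc m)" for m
    using casoratian_psi_int[OF assms(3)] by (simp add: C_def Gp_def Gm_def)
  moreover have "Gp \<longlonglongrightarrow> Tp" "Gm \<longlonglongrightarrow> Tm"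
    unfolding Gp_def[abs_def] Gm_def[abs_def] Tp_def Tm_def
    using psi_gf_tendsto[OF assms(1,2), of \<beta> z] psi_gf_tendsto[OF assms(1,2), of \<beta> "inverse z"]
    by (simp_all add: power_inverse)
  then have "(\<lambda>m. inverse z * Gp (Suc m) * Gm (Suc (Suc m)) - z * Gp (Suc (Suc m)) * Gm (Suc m))
      \<longlonglongrightarrow> inverse z * Tp * Tm - z * Tp * Tm"
    by (intro tendsto_intros LIMSEQ_Suc)
  ultimately have "C (-1) = inverse z * Tp * Tm - z * Tp * Tm"
    by (simp add: LIMSEQ_const_iff)
  also have "\<dots> = inverse z * ((1 - z^2) * Tp) * Tm"
    using assms(3) by (simp add: field_simps power2_eq_square)
  also have "(1 - z^2) * Tp = qpoch_inf (z^2) q"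
    using qpoch_inf_shift[OF assms(1), of "z^2"] by (simp add: Tp_def mult.commute)
  finally show ?thesis
    by (simp add: C_def Tm_def)
qed

theorem proposition2p4:
  fixes q :: real and \<alpha> \<beta> z :: complex
  assumes "0 < q" "q < 1" "norm \<alpha> < 1" "z \<noteq> 0"
  shows "(\<forall>n::int. n \<ge> 0 \<longrightarrow>
            psi_plus q \<alpha> \<beta> (n-1) z
            - (z + inverse z) * (1 - \<beta> * of_real q powi n) / (1 - \<alpha> * of_real q powi n)
              * psi_plus q \<alpha> \<beta> n z
            + psi_plus q \<alpha> \<beta> (n+1) z = 0)
       \<and> (\<forall>n::int. n \<ge> 0 \<longrightarrow>
            psi_minus q \<alpha> \<beta> (n-1) z
            - (z + inverse z) * (1 - \<beta> * of_real q powi n) / (1 - \<alpha> * of_real q powi n)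
              * psi_minus q \<alpha> \<beta> n z
            + psi_minus q \<alpha> \<beta> (n+1) z = 0)
       \<and> (\<forall>n::int. n \<ge> -1 \<longrightarrow>
            psi_plus q \<alpha> \<beta> n z * psi_minus q \<alpha> \<beta> (n+1) z
            - psi_plus q \<alpha> \<beta> (n+1) z * psi_minus q \<alpha> \<beta> n z
            = inverse z * qpoch_inf (z^2) q * qpoch_inf (of_real q * inverse (z^2)) q)
       \<and> ((\<forall>a b :: complex.
              (\<forall>n::int. n \<ge> -1 \<longrightarrow> a * psi_plus q \<alpha> \<beta> n z + b * psi_minus q \<alpha> \<beta> n z = 0)
              \<longrightarrow> a = 0 \<and> b = 0)
          \<longleftrightarrow> \<not> (\<exists>j::int. z = of_real (q powr (of_int j / 2)) \<or> z = - of_real (q powr (of_int j / 2))))"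
proof -
  have q: "\<bar>q\<bar> < 1"
    using assms(1,2) by simp
  note plus = solves_recurrence_psi_plus[OF q assms(3,4), of \<beta>]
  note minus = solves_recurrence_psi_minus[OF q assms(3,4), of \<beta>]
  define W where "W = inverse z * qpoch_inf (z^2) q * qpoch_inf (of_real q * inverse (z^2)) q"
  have casoratian: "\<forall>n\<ge>-1. casoratian (\<lambda>n. psi_plus q \<alpha> \<beta> n z) (\<lambda>n. psi_minus q \<alpha> \<beta> n z) n = W"
    using casoratian_const[OF plus minus] casoratian_psi[OF q assms(3,4)] by (simp add: W_def)
  have "W = 0 \<longleftrightarrow> (\<exists>j::int. z = of_real (q powr (of_int j / 2)) \<or> z = - of_real (q powr (of_int j / 2)))"
    using qpoch_inf_theta_eq_0_iff[OF _ q, of "z^2"] assms(1) eq_pm_powr_half_iff[OF assms(1), of z] assms(4)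
    by (simp add: W_def mult.assoc)
  then have "(\<forall>a b. (\<forall>n\<ge>-1. a * psi_plus q \<alpha> \<beta> n z + b * psi_minus q \<alpha> \<beta> n z = 0) \<longrightarrow> a = 0 \<and> b = 0)
      \<longleftrightarrow> \<not> (\<exists>j::int. z = of_real (q powr (of_int j / 2)) \<or> z = - of_real (q powr (of_int j / 2)))"
    using solutions_independent_iff_casoratian_nonzero[OF plus minus] casoratian by simp
  with plus minus casoratian show ?thesis
    unfolding solves_recurrence_def casoratian_def W_def by blast
qed

end
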